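(* Let $\mathbf{IL}\mathsf X$ be a Horn logic and let $T$ be an $\mathbf{IL}\mathsf X$-satisfiable $\mathbf{IL}\mathsf X$-tableau (for some finite set $\Gamma$ of formulas). Then for any tableau rule, the tableau $T'$ obtained from $T$ by an application of that rule is also $\mathbf{IL}\mathsf X$-satisfiable.
   Context: Formulas: built from a countable set $\mathsf{Prop}$ of propositional variables by $\neg$, $\to$, unary $\Box$ and binary $\rhd$. $\mathbf{IL}$ is the modal logic with axioms all instances of propositional tautologies and the schemes $\Box(A\to B)\to(\Box A\to\Box B)$, $\Box(\Box A\to A)\to\Box A$, $\Box(A\to B)\to A\rhd B$, $(A\rhd B)\wedge(B\rhd C)\to A\rhd C$, $(A\rhd C)\wedge(B\rhd C)\to A\vee B\rhd C$, $A\rhd B\to(\Diamond A\to\Diamond B)$, $\Diamond A\rhd A$ ($\Diamond=\neg\Box\neg$), rules modus ponens and necessitation. An $\mathbf{IL}$-frame is $\langle W,R,S\rangle$ with $W\neq\emptyset$, $R$ transitive and Noetherian (no infinite chains $x_0Rx_1Rx_2\cdots$), $S$ ternary, $yS_xz$ meaning $(x,y,z)\in S$, each $S_x$ a reflexive transitive relation on $\{y:xRy\}$, and $xRyRz\Rightarrow yS_xz$. A model adds a valuation $V$; forcing is standard for $\neg,\to$; $x\Vdash\Box A$ iff all $R$-successors force $A$; $x\Vdash A\rhd B$ iff for every $y$ with $xRy$ and $y\Vdash A$ there is $z$ with $yS_xz$, $z\Vdash B$; and for $w\in W$, $y\Vdash\Box_wA$ iff every $z$ with $yS_wz$ forces $A$.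 $\mathbf{IL}\mathsf X$ is $\mathbf{IL}$ plus axiom schemes $\mathsf X$; it is Horn if there is a set $\mathcal C_{\mathsf X}$ of strict universal Horn sentences $\forall\cdots\forall(\varphi_1\wedge\dots\wedge\varphi_n\to\psi)$ ($n\ge0$, atomic $\varphi_i,\psi$) in the language $\{R,S\}$ such that an $\mathbf{IL}$-frame validates all theorems of $\mathbf{IL}\mathsf X$ iff it satisfies $\mathcal C_{\mathsf X}$; $\mathbf{IL}\mathsf X$-frames/models are those satisfying $\mathcal C_{\mathsf X}$. Labels: $0$; $\sigma Rn$ for a label $\sigma$, $n\in\mathbb N$; $\sigma S_\rho n$ for labels $\sigma,\rho$ with $\rho$ a strict non-empty prefix of $\sigma$. Extended formulas also allow unary operators $\Box_\rho$, $\rho$ a label. Labelled formula: $\sigma::A$. For a set $\Lambda$ of labels, $\mathbf R^\Lambda,\mathbf S^\Lambda$ are the least relations on $\Lambda$ with: (1) $\sigma,\sigma Rn\in\Lambda\Rightarrow\sigma\mathbf R\,\sigma Rn$; (2) $\mathbf R$ transitive; (3) $\sigma,\rho,\sigma S_\rho n\in\Lambda\Rightarrow\sigma\mathbf S_\rho\,\sigma S_\rho n$; (4) $\sigma\mathbf R\tau\Rightarrow\tau\mathbf S_\sigma\tau$; (5) $\rho\mathbf R\sigma\mathbf R\tau\Rightarrow\sigma\mathbf S_\rho\tau$; (6) $\sigma\mathbf S_\rho\tau\mathbf S_\rho\upsilon\Rightarrow\sigma\mathbf S_\rho\upsilon$; (7) $\sigma\mathbf S_\rho\tau\Rightarrow\rho\mathbf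 R\sigma,\rho\mathbf R\tau$; (8) $\langle\Lambda,\mathbf R^\Lambda,\mathbf S^\Lambda\rangle\models\mathcal C_{\mathsf X}$ (where $\sigma\mathbf S_\rho\tau$ means $(\rho,\sigma,\tau)\in\mathbf S^\Lambda$). Tableau rules w.r.t. $\Lambda$ (antecedent $\Rightarrow$ succedents; "$\mid$" = branching): $\sigma::\neg\neg A\Rightarrow\sigma::A$; $\sigma::A\to B\Rightarrow\sigma::\neg A\mid\sigma::B$; $\sigma::\neg(A\to B)\Rightarrow\sigma::A,\sigma::\neg B$; $\sigma::\Box A\Rightarrow\tau::A$ when $\sigma\mathbf R\tau$; $\sigma::\Box_\rho A\Rightarrow\tau::A$ when $\sigma\mathbf S_\rho\tau$; $\sigma::A\rhd B\Rightarrow\tau::\neg A\mid\tau::\neg\Box_\sigma\neg B$ when $\sigma\mathbf R\tau$; $\sigma::\neg\Box A\Rightarrow\sigma Rn::\neg A,\sigma Rn::\Box A$ with $\sigma Rn\notin\Lambda$; $\sigma::\neg\Box_\rho A\Rightarrow\sigma S_\rho n::\neg A,\sigma S_\rho n::\Box A$ with $\sigma S_\rho n\notin\Lambda$; $\sigma::\neg(A\rhd B)\Rightarrow\sigma Rn::A,\sigma Rn::\Box_\sigma\neg B,\sigma Rn::\Box\neg A$ with $\sigma Rn\notin\Lambda$. $\mathbf{IL}\mathsf X$-tableau for finite $\Gamma$ (downward growing binary tree of labelled formulas), inductively: a single node $0::A$ with $A\in\Gamma$; extending any branch by $0::A$, $A\in\Gamma$; if $\mathcal B$ is a branch and some $\sigma::A$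 on $\mathcal B$ is the antecedent of an instance of a rule w.r.t. $\mathrm{lab}(\mathcal B)$ (labels occurring on $\mathcal B$), extending $\mathcal B$ by the succedents (with branching). Satisfiability: a set $\mathcal X$ of labelled formulas is $\mathbf{IL}\mathsf X$-satisfiable if there are an $\mathbf{IL}\mathsf X$-model $M=\langle W,R,S,V\rangle$ and a map $I:\mathrm{lab}(\mathcal X)\to W$ such that (i) $\sigma\mathbf R\tau\Rightarrow I(\sigma)RI(\tau)$; (ii) $\sigma\mathbf S_\rho\tau\Rightarrow I(\sigma)S_{I(\rho)}I(\tau)$ (relations $\mathbf R^{\mathrm{lab}(\mathcal X)},\mathbf S^{\mathrm{lab}(\mathcal X)}$); (iii) $M,I(\sigma)\Vdash A$ for all $\sigma::A\in\mathcal X$, with $\Box_\rho$ interpreted as $\Box_{I(\rho)}$. A tableau is $\mathbf{IL}\mathsf X$-satisfiable if some branch of it is. *)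

theory Defs
  imports Main
begin

text \<open>Labels: 0 is Root; RChild s n is s R n; SChild s r n is s S_r n.\<close>
datatype label = Root | RChild label nat | SChild label label nat

fun strict_prefix :: "label \<Rightarrow> label \<Rightarrow> bool" where
  "strict_prefix r Root = False"
| "strict_prefix r (RChild s n) = (r = s \<or> strict_prefix r s)"
| "strict_prefix r (SChild s q n) = (r = s \<or> strict_prefix r s)"

fun is_label :: "label \<Rightarrow> bool" where
  "is_label Root = True"
| "is_label (RChild s n) = is_label s"
| "is_label (SChild s r n) = (is_label s \<and> is_label r \<and> strict_prefix r s)"

datatype fm = Var nat | Neg fm | Imp fm fm | Box fm | Rhd fm fm

datatype efm = EVar nat | ENeg efm | EImp efm efm | EBox efm | ERhd efm efm
  | EBoxL label efm

fun emb :: "fm \<Rightarrow> efm" where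
  "emb (Var p) = EVar p"
| "emb (Neg A) = ENeg (emb A)"
| "emb (Imp A B) = EImp (emb A) (emb B)"
| "emb (Box A) = EBox (emb A)"
| "emb (Rhd A B) = ERhd (emb A) (emb B)"

definition And :: "fm \<Rightarrow> fm \<Rightarrow> fm" where "And A B = Neg (Imp A (Neg B))"
definition Or :: "fm \<Rightarrow> fm \<Rightarrow> fm" where "Or A B = Imp (Neg A) B"
definition Dia :: "fm \<Rightarrow> fm" where "Dia A = Neg (Box (Neg A))"

text \<open>Boolean evaluation treating Var, Box, Rhd formulas as atoms; a formula is an
  instance of a propositional tautology iff it is true under every such evaluation.\<close>
fun beval :: "(fm \<Rightarrow> bool) \<Rightarrow> fm \<Rightarrow> bool" where
  "beval f (Neg A) = (\<not> beval f A)"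
| "beval f (Imp A B) = (beval f A \<longrightarrow> beval f B)"
| "beval f (Var p) = f (Var p)"
| "beval f (Box A) = f (Box A)"
| "beval f (Rhd A B) = f (Rhd A B)"

definition taut_instance :: "fm \<Rightarrow> bool" where
  "taut_instance A \<longleftrightarrow> (\<forall>f. beval f A)"

fun subst :: "(nat \<Rightarrow> fm) \<Rightarrow> fm \<Rightarrow> fm" where
  "subst s (Var p) = s p"
| "subst s (Neg A) = Neg (subst s A)"
| "subst s (Imp A B) = Imp (subst s A) (subst s B)"
| "subst s (Box A) = Box (subst s A)"
| "subst s (Rhd A B) = Rhd (subst s A) (subst s B)"

text \<open>Theorems of IL X, where X is a set of axiom schemes (all substitution
  instances of members of X are axioms).\<close>
inductive ILX_thm :: "fm set \<Rightarrow> fm \<Rightarrow> bool" for X :: "fm set" where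
  taut: "taut_instance A \<Longrightarrow> ILX_thm X A"
| K: "ILX_thm X (Imp (Box (Imp A B)) (Imp (Box A) (Box B)))"
| L: "ILX_thm X (Imp (Box (Imp (Box A) A)) (Box A))"
| J1: "ILX_thm X (Imp (Box (Imp A B)) (Rhd A B))"
| J2: "ILX_thm X (Imp (And (Rhd A B) (Rhd B D)) (Rhd A D))"
| J3: "ILX_thm X (Imp (And (Rhd A D) (Rhd B D)) (Rhd (Or A B) D))"
| J4: "ILX_thm X (Imp (Rhd A B) (Imp (Dia A) (Dia B)))"
| J5: "ILX_thm X (Rhd (Dia A) A)"
| Xax: "A \<in> X \<Longrightarrow> ILX_thm X (subst s A)"
| MP: "ILX_thm X (Imp A B) \<Longrightarrow> ILX_thm X A \<Longrightarrow> ILX_thm X B"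
| Nec: "ILX_thm X A \<Longrightarrow> ILX_thm X (Box A)"

text \<open>A frame is given by W, R and S where S x y z means y S_x z.\<close>
definition IL_frame :: "'w set \<Rightarrow> ('w \<Rightarrow> 'w \<Rightarrow> bool) \<Rightarrow> ('w \<Rightarrow> 'w \<Rightarrow> 'w \<Rightarrow> bool) \<Rightarrow> bool" where
  "IL_frame W R S \<longleftrightarrow>
     W \<noteq> {}
   \<and> (\<forall>x y. R x y \<longrightarrow> x \<in> W \<and> y \<in> W)
   \<and> (\<forall>x y z. R x y \<longrightarrow> R y z \<longrightarrow> R x z)
   \<and> \<not> (\<exists>f :: nat \<Rightarrow> 'w. \<forall>i. R (f i) (f (Suc i)))
   \<and> (\<forall>x y z. S x y z \<longrightarrow> R x y \<and> R x z)
   \<and> (\<forall>x y. R x y \<longrightarrow> S x y y)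
   \<and> (\<forall>x y z u. S x y z \<longrightarrow> S x z u \<longrightarrow> S x y u)
   \<and> (\<forall>x y z. R x y \<longrightarrow> R y z \<longrightarrow> S x y z)"

text \<open>Forcing; V is the valuation, I interprets the labels occurring in Box_r.\<close>
fun forces :: "('w \<Rightarrow> 'w \<Rightarrow> bool) \<Rightarrow> ('w \<Rightarrow> 'w \<Rightarrow> 'w \<Rightarrow> bool) \<Rightarrow> ('w \<Rightarrow> nat \<Rightarrow> bool)
    \<Rightarrow> (label \<Rightarrow> 'w) \<Rightarrow> 'w \<Rightarrow> efm \<Rightarrow> bool" where
  "forces R S V I x (EVar p) = V x p"
| "forces R S V I x (ENeg A) = (\<not> forces R S V I x A)"
| "forces R S V I x (EImp A B) = (forces R S V I x A \<longrightarrow> forces R S V I x B)"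
| "forces R S V I x (EBox A) = (\<forall>y. R x y \<longrightarrow> forces R S V I y A)"
| "forces R S V I x (ERhd A B) =
     (\<forall>y. R x y \<longrightarrow> forces R S V I y A \<longrightarrow> (\<exists>z. S x y z \<and> forces R S V I z B))"
| "forces R S V I y (EBoxL r A) = (\<forall>z. S (I r) y z \<longrightarrow> forces R S V I z A)"

definition frame_valid :: "'w set \<Rightarrow> ('w \<Rightarrow> 'w \<Rightarrow> bool) \<Rightarrow> ('w \<Rightarrow> 'w \<Rightarrow> 'w \<Rightarrow> bool) \<Rightarrow> fm \<Rightarrow> bool" where
  "frame_valid W R S A \<longleftrightarrow> (\<forall>V I. \<forall>x\<in>W. forces R S V I x (emb A))"

text \<open>Atoms over variables x_i: AR i j is x_i R x_j; AS i j k is x_j S_{x_i} x_k.\<close>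
datatype atom = AR nat nat | AS nat nat nat

text \<open>A strict universal Horn sentence: body atoms (conjunction) and head atom,
  all variables universally quantified.\<close>
type_synonym horn_clause = "atom list \<times> atom"

fun atom_holds :: "('a \<Rightarrow> 'a \<Rightarrow> bool) \<Rightarrow> ('a \<Rightarrow> 'a \<Rightarrow> 'a \<Rightarrow> bool) \<Rightarrow> (nat \<Rightarrow> 'a) \<Rightarrow> atom \<Rightarrow> bool" where
  "atom_holds R S v (AR i j) = R (v i) (v j)"
| "atom_holds R S v (AS i j k) = S (v i) (v j) (v k)"

definition horn_sat :: "'a set \<Rightarrow> ('a \<Rightarrow> 'a \<Rightarrow> bool) \<Rightarrow> ('a \<Rightarrow> 'a \<Rightarrow> 'a \<Rightarrow> bool) \<Rightarrow> horn_clause set \<Rightarrow> bool" where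
  "horn_sat D R S C \<longleftrightarrow>
     (\<forall>(body, hd) \<in> C. \<forall>v. (\<forall>i. v i \<in> D) \<longrightarrow>
        (\<forall>a \<in> set body. atom_holds R S v a) \<longrightarrow> atom_holds R S v hd)"

text \<open>C witnesses that IL X is Horn (with respect to frames over the world type 'w).\<close>
definition horn_witness :: "'w itself \<Rightarrow> fm set \<Rightarrow> horn_clause set \<Rightarrow> bool" where
  "horn_witness _ X C \<longleftrightarrow>
     (\<forall>(W :: 'w set) R S. IL_frame W R S \<longrightarrow>
        ((\<forall>A. ILX_thm X A \<longrightarrow> frame_valid W R S A) \<longleftrightarrow> horn_sat W R S C))"

definition ILX_model :: "horn_clause set \<Rightarrow> 'w set \<Rightarrow> ('w \<Rightarrow> 'w \<Rightarrow> bool)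
    \<Rightarrow> ('w \<Rightarrow> 'w \<Rightarrow> 'w \<Rightarrow> bool) \<Rightarrow> ('w \<Rightarrow> nat \<Rightarrow> bool) \<Rightarrow> bool" where
  "ILX_model C W R S V \<longleftrightarrow> IL_frame W R S \<and> horn_sat W R S C"

text \<open>R' s t means s R t; S' r s t means s S_r t. Conditions (1)-(8).\<close>
definition lab_closed :: "label set \<Rightarrow> horn_clause set \<Rightarrow> (label \<Rightarrow> label \<Rightarrow> bool)
    \<Rightarrow> (label \<Rightarrow> label \<Rightarrow> label \<Rightarrow> bool) \<Rightarrow> bool" where
  "lab_closed \<Lambda> C R' S' \<longleftrightarrow>
     (\<forall>s n. s \<in> \<Lambda> \<longrightarrow> RChild s n \<in> \<Lambda> \<longrightarrow> R' s (RChild s n))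
   \<and> (\<forall>s t u. R' s t \<longrightarrow> R' t u \<longrightarrow> R' s u)
   \<and> (\<forall>s r n. s \<in> \<Lambda> \<longrightarrow> r \<in> \<Lambda> \<longrightarrow> SChild s r n \<in> \<Lambda> \<longrightarrow> S' r s (SChild s r n))
   \<and> (\<forall>s t. R' s t \<longrightarrow> S' s t t)
   \<and> (\<forall>r s t. R' r s \<longrightarrow> R' s t \<longrightarrow> S' r s t)
   \<and> (\<forall>r s t u. S' r s t \<longrightarrow> S' r t u \<longrightarrow> S' r s u)
   \<and> (\<forall>r s t. S' r s t \<longrightarrow> R' r s \<and> R' r t)
   \<and> horn_sat \<Lambda> R' S' C"

text \<open>The least such relations (intersection of all closed pairs).\<close>
definition LR :: "label set \<Rightarrow> horn_clause set \<Rightarrow> label \<Rightarrow> label \<Rightarrow> bool" where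
  "LR \<Lambda> C s t \<longleftrightarrow> (\<forall>R' S'. lab_closed \<Lambda> C R' S' \<longrightarrow> R' s t)"

definition LS :: "label set \<Rightarrow> horn_clause set \<Rightarrow> label \<Rightarrow> label \<Rightarrow> label \<Rightarrow> bool" where
  "LS \<Lambda> C r s t \<longleftrightarrow> (\<forall>R' S'. lab_closed \<Lambda> C R' S' \<longrightarrow> S' r s t)"

type_synonym lfm = "label \<times> efm"

definition lab :: "lfm set \<Rightarrow> label set" where "lab X = fst ` X"

text \<open>rule_inst C \<Lambda> a alts: the labelled formula a is the antecedent of an instance
  of a tableau rule w.r.t. \<Lambda>, whose succedents are alts (a list of alternatives;
  two alternatives means branching).\<close>
inductive rule_inst :: "horn_clause set \<Rightarrow> label set \<Rightarrow> lfm \<Rightarrow> lfm list list \<Rightarrow> bool"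
  for C :: "horn_clause set" and \<Lambda> :: "label set" where
  dneg: "rule_inst C \<Lambda> (s, ENeg (ENeg A)) [[(s, A)]]"
| imp: "rule_inst C \<Lambda> (s, EImp A B) [[(s, ENeg A)], [(s, B)]]"
| nimp: "rule_inst C \<Lambda> (s, ENeg (EImp A B)) [[(s, A), (s, ENeg B)]]"
| box: "LR \<Lambda> C s t \<Longrightarrow> rule_inst C \<Lambda> (s, EBox A) [[(t, A)]]"
| boxl: "LS \<Lambda> C r s t \<Longrightarrow> rule_inst C \<Lambda> (s, EBoxL r A) [[(t, A)]]"
| rhd: "LR \<Lambda> C s t \<Longrightarrow>
     rule_inst C \<Lambda> (s, ERhd A B) [[(t, ENeg A)], [(t, ENeg (EBoxL s (ENeg B)))]]"
| nbox: "RChild s n \<notin> \<Lambda> \<Longrightarrow>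
     rule_inst C \<Lambda> (s, ENeg (EBox A)) [[(RChild s n, ENeg A), (RChild s n, EBox A)]]"
| nboxl: "is_label (SChild s r n) \<Longrightarrow> SChild s r n \<notin> \<Lambda> \<Longrightarrow>
     rule_inst C \<Lambda> (s, ENeg (EBoxL r A))
       [[(SChild s r n, ENeg A), (SChild s r n, EBox A)]]"
| nrhd: "RChild s n \<notin> \<Lambda> \<Longrightarrow>
     rule_inst C \<Lambda> (s, ENeg (ERhd A B))
       [[(RChild s n, A), (RChild s n, EBoxL s (ENeg B)), (RChild s n, EBox (ENeg A))]]"

text \<open>A tableau is represented by the list of its branches (each branch is the list of
  labelled formulas from the root to a leaf).\<close>
type_synonym tableau = "lfm list list"

definition rule_step :: "horn_clause set \<Rightarrow> tableau \<Rightarrow> tableau \<Rightarrow> bool" where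
  "rule_step C T T' \<longleftrightarrow>
     (\<exists>T1 B T2 a alts. T = T1 @ [B] @ T2 \<and> a \<in> set B
        \<and> rule_inst C (lab (set B)) a alts
        \<and> T' = T1 @ map (\<lambda>alt. B @ alt) alts @ T2)"

inductive is_tableau :: "horn_clause set \<Rightarrow> fm set \<Rightarrow> tableau \<Rightarrow> bool"
  for C :: "horn_clause set" and \<Gamma> :: "fm set" where
  init: "A \<in> \<Gamma> \<Longrightarrow> is_tableau C \<Gamma> [[(Root, emb A)]]"
| add: "is_tableau C \<Gamma> (T1 @ [B] @ T2) \<Longrightarrow> A \<in> \<Gamma> \<Longrightarrow>
     is_tableau C \<Gamma> (T1 @ [B @ [(Root, emb A)]] @ T2)"
| rule: "is_tableau C \<Gamma> T \<Longrightarrow> rule_step C T T' \<Longrightarrow> is_tableau C \<Gamma> T'"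

definition lsat :: "'w itself \<Rightarrow> horn_clause set \<Rightarrow> lfm set \<Rightarrow> bool" where
  "lsat _ C X \<longleftrightarrow>
     (\<exists>(W :: 'w set) R S V (I :: label \<Rightarrow> 'w).
        ILX_model C W R S V
      \<and> (\<forall>s \<in> lab X. I s \<in> W)
      \<and> (\<forall>s t. LR (lab X) C s t \<longrightarrow> R (I s) (I t))
      \<and> (\<forall>r s t. LS (lab X) C r s t \<longrightarrow> S (I r) (I s) (I t))
      \<and> (\<forall>(s, A) \<in> X. forces R S V I (I s) A))"

definition tableau_sat :: "'w itself \<Rightarrow> horn_clause set \<Rightarrow> tableau \<Rightarrow> bool" where
  "tableau_sat w C T \<longleftrightarrow> (\<exists>B \<in> set T. lsat w C (set B))"

end

theory Submission
  imports Defs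
begin

text \<open>A satisfied branch stays satisfied in the same model: the static rules only
  read off what the model already forces at worlds interpreting existing labels.  For the
  rules creating a fresh label, the interpretation is extended by a witness world
  which, by Noetherianity of R, can be chosen R-maximal among the candidates; maximality
  is exactly what makes the accompanying formula \<open>\<box>A\<close> (resp. \<open>\<box>\<not>A\<close>) true there.
  The least relations on the enlarged label set are still respected, because the
  preimage of the model's R and S under the interpretation is closed under conditions
  (1)-(8), the Horn conditions transferring along any map into the frame.\<close>

fun box_labels :: "efm \<Rightarrow> label set" where
  "box_labels (EVar p) = {}"
| "box_labels (ENeg A) = box_labels A"
| "box_labels (EImp A B) = box_labels A \<union> box_labels B"
| "box_labels (EBox A) = box_labels A"
| "box_labels (ERhd A B) = box_labels A \<union> box_labels B"
| "box_labels (EBoxL r A) = insert r (box_labels A)"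

lemma box_labels_emb [simp]: "box_labels (emb A) = {}"
  by (induction A) auto

lemma forces_cong_box_labels:
  "(\<And>r. r \<in> box_labels A \<Longrightarrow> I r = I' r) \<Longrightarrow> forces R S V I x A = forces R S V I' x A"
  by (induction A arbitrary: x) auto

lemma lab_Un [simp]: "lab (X \<union> Y) = lab X \<union> lab Y"
  and lab_insert [simp]: "lab (insert p X) = insert (fst p) (lab X)"
  and lab_empty [simp]: "lab {} = {}"
  by (auto simp: lab_def)

lemma lab_memI: "(s, A) \<in> X \<Longrightarrow> s \<in> lab X"
  by (force simp: lab_def)

definition wf_labels :: "label set \<Rightarrow> bool" where
  "wf_labels L \<longleftrightarrow> (\<forall>x\<in>L. is_label x \<and> (\<forall>r. strict_prefix r x \<longrightarrow> r \<in> L))"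

text \<open>Branch invariant: reinterpreting a fresh label must not change what the branch
  forces, and the parent of a new child label must already be interpreted.\<close>

definition wf_branch :: "lfm list \<Rightarrow> bool" where
  "wf_branch B \<longleftrightarrow> wf_labels (lab (set B)) \<and> (\<forall>(s, A)\<in>set B. box_labels A \<subseteq> lab (set B))"

lemma wf_branch_box_labels: "wf_branch B \<Longrightarrow> (s, A) \<in> set B \<Longrightarrow> box_labels A \<subseteq> lab (set B)"
  unfolding wf_branch_def by blast

lemma wf_branch_label:
  "wf_branch B \<Longrightarrow> x \<in> lab (set B) \<Longrightarrow> is_label x \<and> (\<forall>r. strict_prefix r x \<longrightarrow> r \<in> lab (set B))"
  unfolding wf_branch_def wf_labels_def by blast

lemma wf_branch_append:
  assumes wf: "wf_branch B"
    and alt: "\<And>s A. (s, A) \<in> set alt \<Longrightarrow>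
      is_label s \<and> (\<forall>r. strict_prefix r s \<longrightarrow> r \<in> lab (set B)) \<and> box_labels A \<subseteq> lab (set B)"
  shows "wf_branch (B @ alt)"
proof -
  have "is_label x \<and> (\<forall>r. strict_prefix r x \<longrightarrow> r \<in> lab (set B))"
    if "x \<in> lab (set B) \<union> lab (set alt)" for x
    using that wf_branch_label[OF wf] alt by (auto simp: lab_def)
  then have "wf_labels (lab (set B) \<union> lab (set alt))"
    unfolding wf_labels_def by blast
  moreover have "\<forall>(s, A)\<in>set B \<union> set alt. box_labels A \<subseteq> lab (set B)"
    using wf alt unfolding wf_branch_def by auto
  ultimately show ?thesis
    unfolding wf_branch_def by auto
qed

lemma lab_closed_universal:
  "lab_closed L C (\<lambda>a b. a \<in> L \<and> b \<in> L) (\<lambda>r a b. r \<in> L \<and> a \<in> L \<and> b \<in> L)"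
proof -
  have "atom_holds (\<lambda>a b. a \<in> L \<and> b \<in> L) (\<lambda>r a b. r \<in> L \<and> a \<in> L \<and> b \<in> L) v t"
    if "\<forall>i. v i \<in> L" for v t
    using that by (cases t) auto
  then show ?thesis
    unfolding lab_closed_def horn_sat_def by auto
qed

lemma LR_mem: "LR L C s t \<Longrightarrow> s \<in> L \<and> t \<in> L"
  using lab_closed_universal unfolding LR_def by fastforce

lemma LS_mem: "LS L C r s t \<Longrightarrow> r \<in> L \<and> s \<in> L \<and> t \<in> L"
  using lab_closed_universal unfolding LS_def by fastforce

lemma LR_RChild: "s \<in> L \<Longrightarrow> RChild s n \<in> L \<Longrightarrow> LR L C s (RChild s n)"
  unfolding LR_def lab_closed_def by blast

lemma LS_SChild: "s \<in> L \<Longrightarrow> r \<in> L \<Longrightarrow> SChild s r n \<in> L \<Longrightarrow> LS L C r s (SChild s r n)"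
  unfolding LS_def lab_closed_def by blast

lemma horn_sat_pullback:
  assumes "horn_sat W R S C" and "\<forall>x\<in>L. I x \<in> W"
  shows "horn_sat L (\<lambda>a b. a \<in> L \<and> b \<in> L \<and> R (I a) (I b))
    (\<lambda>r a b. r \<in> L \<and> a \<in> L \<and> b \<in> L \<and> S (I r) (I a) (I b)) C"
proof -
  have pull: "atom_holds (\<lambda>a b. a \<in> L \<and> b \<in> L \<and> R (I a) (I b))
      (\<lambda>r a b. r \<in> L \<and> a \<in> L \<and> b \<in> L \<and> S (I r) (I a) (I b)) v t
    = atom_holds R S (I \<circ> v) t" if "\<forall>i. v i \<in> L" for v t
    using that by (cases t) auto
  show ?thesis
    unfolding horn_sat_def
  proof (clarify)
    fix body hd v
    assume "(body, hd) \<in> C" and vL: "\<forall>i. v i \<in> L"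
      and "\<forall>a\<in>set body. atom_holds (\<lambda>a b. a \<in> L \<and> b \<in> L \<and> R (I a) (I b))
        (\<lambda>r a b. r \<in> L \<and> a \<in> L \<and> b \<in> L \<and> S (I r) (I a) (I b)) v a"
    moreover have "\<forall>i. (I \<circ> v) i \<in> W"
      using vL assms(2) by simp
    ultimately show "atom_holds (\<lambda>a b. a \<in> L \<and> b \<in> L \<and> R (I a) (I b))
        (\<lambda>r a b. r \<in> L \<and> a \<in> L \<and> b \<in> L \<and> S (I r) (I a) (I b)) v hd"
      using assms(1) pull[OF vL] unfolding horn_sat_def by fastforce
  qed
qed

locale ilx_model =
  fixes C :: "horn_clause set" and W :: "'w set" and R :: "'w \<Rightarrow> 'w \<Rightarrow> bool"
    and S :: "'w \<Rightarrow> 'w \<Rightarrow> 'w \<Rightarrow> bool" and V :: "'w \<Rightarrow> nat \<Rightarrow> bool"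
  assumes model: "ILX_model C W R S V"
begin

lemma horn: "horn_sat W R S C"
  using model unfolding ILX_model_def by blast

lemma R_mem: "R x y \<Longrightarrow> x \<in> W \<and> y \<in> W"
  and R_trans: "R x y \<Longrightarrow> R y z \<Longrightarrow> R x z"
  and S_imp_R: "S x y z \<Longrightarrow> R x y \<and> R x z"
  and R_imp_S_refl: "R x y \<Longrightarrow> S x y y"
  and S_trans: "S x y z \<Longrightarrow> S x z u \<Longrightarrow> S x y u"
  and R_R_imp_S: "R x y \<Longrightarrow> R y z \<Longrightarrow> S x y z"
  using model unfolding ILX_model_def IL_frame_def by blast+

lemma exists_R_maximal:
  assumes "P y"
  shows "\<exists>z. P z \<and> (\<forall>w. R z w \<longrightarrow> \<not> P w)"
proof -
  have "\<nexists>f. \<forall>i. R (f i) (f (Suc i))"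
    using model unfolding ILX_model_def IL_frame_def by blast
  then have "wf {(b, a). R a b}"
    by (auto simp: wf_iff_no_infinite_down_chain)
  then obtain z where "z \<in> Collect P" and "\<And>w. (w, z) \<in> {(b, a). R a b} \<Longrightarrow> w \<notin> Collect P"
    using wfE_min[of "{(b, a). R a b}" y "Collect P"] assms by blast
  then show ?thesis
    by auto
qed

lemma neg_box_witness:
  assumes "\<not> forces R S V I x (EBox A)"
  shows "\<exists>z. R x z \<and> \<not> forces R S V I z A \<and> forces R S V I z (EBox A)"
proof -
  obtain z where z: "R x z \<and> \<not> forces R S V I z A"
    and max: "\<forall>w. R z w \<longrightarrow> \<not> (R x w \<and> \<not> forces R S V I w A)"
    using exists_R_maximal[of "\<lambda>z. R x z \<and> \<not> forces R S V I z A"] assms by auto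
  then show ?thesis
    using R_trans by auto
qed

lemma neg_boxl_witness:
  assumes "\<not> forces R S V I y (EBoxL r A)"
  shows "\<exists>z. S (I r) y z \<and> \<not> forces R S V I z A \<and> forces R S V I z (EBox A)"
proof -
  obtain z where z: "S (I r) y z \<and> \<not> forces R S V I z A"
    and max: "\<forall>w. R z w \<longrightarrow> \<not> (S (I r) y w \<and> \<not> forces R S V I w A)"
    using exists_R_maximal[of "\<lambda>z. S (I r) y z \<and> \<not> forces R S V I z A"] assms by auto
  have "S (I r) y w" if "R z w" for w
    using z that S_imp_R R_R_imp_S S_trans by blast
  then show ?thesis
    using z max by auto
qed

lemma neg_rhd_witness:
  assumes "\<not> forces R S V I (I s) (ERhd A B)"
  shows "\<exists>z. R (I s) z \<and> forces R S V I z A \<and> forces R S V I z (EBoxL s (ENeg B))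
    \<and> forces R S V I z (EBox (ENeg A))"
proof -
  let ?P = "\<lambda>z. R (I s) z \<and> forces R S V I z A \<and> (\<forall>u. S (I s) z u \<longrightarrow> \<not> forces R S V I u B)"
  obtain y where "?P y"
    using assms by auto
  then obtain z where z: "?P z" and max: "\<forall>w. R z w \<longrightarrow> \<not> ?P w"
    using exists_R_maximal[of ?P] by blast
  have "\<not> forces R S V I w A" if "R z w" for w
  proof
    assume "forces R S V I w A"
    moreover have "S (I s) z w"
      using z that R_R_imp_S by blast
    ultimately have "?P w"
      using z that R_trans S_trans by blast
    with max that show False
      by blast
  qed
  then show ?thesis
    using z by auto
qed

definition realizes :: "(label \<Rightarrow> 'w) \<Rightarrow> lfm set \<Rightarrow> bool" where
  "realizes I X \<longleftrightarrow> (\<forall>s\<in>lab X. I s \<in> W)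
     \<and> (\<forall>s t. LR (lab X) C s t \<longrightarrow> R (I s) (I t))
     \<and> (\<forall>r s t. LS (lab X) C r s t \<longrightarrow> S (I r) (I s) (I t))
     \<and> (\<forall>(s, A)\<in>X. forces R S V I (I s) A)"

definition respects_children :: "label set \<Rightarrow> (label \<Rightarrow> 'w) \<Rightarrow> bool" where
  "respects_children L I \<longleftrightarrow>
     (\<forall>u m. u \<in> L \<longrightarrow> RChild u m \<in> L \<longrightarrow> R (I u) (I (RChild u m)))
   \<and> (\<forall>u r m. u \<in> L \<longrightarrow> r \<in> L \<longrightarrow> SChild u r m \<in> L \<longrightarrow> S (I r) (I u) (I (SChild u r m)))"

lemma realizes_forces: "realizes I X \<Longrightarrow> (s, A) \<in> X \<Longrightarrow> forces R S V I (I s) A"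
  unfolding realizes_def by blast

lemma realizes_LR: "realizes I X \<Longrightarrow> LR (lab X) C s t \<Longrightarrow> R (I s) (I t)"
  unfolding realizes_def by blast

lemma realizes_LS: "realizes I X \<Longrightarrow> LS (lab X) C r s t \<Longrightarrow> S (I r) (I s) (I t)"
  unfolding realizes_def by blast

lemma realizes_respects_children:
  assumes "realizes I X"
  shows "respects_children (lab X) I"
  unfolding respects_children_def
  using realizes_LR[OF assms LR_RChild] realizes_LS[OF assms LS_SChild] by blast

lemma lab_closed_pullback:
  assumes "\<forall>x\<in>L. I x \<in> W" and "respects_children L I"
  shows "lab_closed L C (\<lambda>a b. a \<in> L \<and> b \<in> L \<and> R (I a) (I b))
    (\<lambda>r a b. r \<in> L \<and> a \<in> L \<and> b \<in> L \<and> S (I r) (I a) (I b))"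
  using assms(2) R_trans S_imp_R R_imp_S_refl S_trans R_R_imp_S
  unfolding lab_closed_def respects_children_def
  by (intro conjI horn_sat_pullback[OF horn assms(1)]) blast+

lemma realizesI:
  assumes "\<forall>s\<in>lab X. I s \<in> W" and "respects_children (lab X) I"
    and "\<forall>(s, A)\<in>X. forces R S V I (I s) A"
  shows "realizes I X"
proof -
  note closed = lab_closed_pullback[OF assms(1,2)]
  have "R (I s) (I t)" if "LR (lab X) C s t" for s t
    using that closed unfolding LR_def by blast
  moreover have "S (I r) (I s) (I t)" if "LS (lab X) C r s t" for r s t
    using that closed unfolding LS_def by blast
  ultimately show ?thesis
    using assms unfolding realizes_def by blast
qed

lemma respects_children_update:
  assumes resp: "respects_children L I" and wf: "wf_labels L" and x: "x \<notin> L"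
    and parent_R: "\<forall>u m. x = RChild u m \<longrightarrow> u \<in> L \<and> R (I u) y"
    and parent_S: "\<forall>u r m. x = SChild u r m \<longrightarrow> u \<in> L \<and> r \<in> L \<and> S (I r) (I u) y"
  shows "respects_children (insert x L) (I(x := y))"
proof -
  have "u \<in> L \<and> r \<in> L" if "SChild u r m \<in> L" for u r m
    using wf that unfolding wf_labels_def by fastforce
  moreover have "u \<in> L" if "RChild u m \<in> L" for u m
    using wf that unfolding wf_labels_def by fastforce
  ultimately show ?thesis
    using resp x parent_R parent_S unfolding respects_children_def
    by (metis fun_upd_apply insert_iff)
qed

lemma realizes_append:
  assumes "realizes I (set B)" and "lab (set alt) \<subseteq> lab (set B)"
    and "\<forall>(s, A)\<in>set alt. forces R S V I (I s) A"
  shows "realizes I (set (B @ alt))"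
proof -
  have "lab (set (B @ alt)) = lab (set B)"
    using assms(2) by auto
  then show ?thesis
    using assms unfolding realizes_def by auto
qed

lemma realizes_append_fresh:
  assumes wf: "wf_branch B" and re: "realizes I (set B)"
    and x: "x \<notin> lab (set B)" and y: "y \<in> W" and "alt \<noteq> []"
    and alt: "\<forall>(s, A)\<in>set alt. s = x \<and> box_labels A \<subseteq> lab (set B) \<and> forces R S V I y A"
    and parent_R: "\<forall>u m. x = RChild u m \<longrightarrow> u \<in> lab (set B) \<and> R (I u) y"
    and parent_S: "\<forall>u r m. x = SChild u r m \<longrightarrow> u \<in> lab (set B) \<and> r \<in> lab (set B) \<and> S (I r) (I u) y"
  shows "realizes (I(x := y)) (set (B @ alt))"
proof -
  let ?I' = "I(x := y)"
  have labs: "lab (set (B @ alt)) = insert x (lab (set B))"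
    using \<open>alt \<noteq> []\<close> alt by (cases alt) (auto simp: lab_def)
  have keep: "forces R S V ?I' w A = forces R S V I w A" if "box_labels A \<subseteq> lab (set B)" for w A
    using that x by (intro forces_cong_box_labels) auto
  have forces_B: "\<forall>(s, A)\<in>set B. forces R S V ?I' (?I' s) A"
    using re wf x keep lab_memI wf_branch_box_labels realizes_forces by fastforce
  have forces_alt: "\<forall>(s, A)\<in>set alt. forces R S V ?I' (?I' s) A"
    using alt keep by auto
  have resp: "respects_children (insert x (lab (set B))) ?I'"
    using respects_children_update realizes_respects_children[OF re] wf x parent_R parent_S
    unfolding wf_branch_def by blast
  have "\<forall>s\<in>lab (set B). I s \<in> W"
    using re unfolding realizes_def by blast
  then have "\<forall>s\<in>insert x (lab (set B)). ?I' s \<in> W"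
    using y by simp
  then show ?thesis
    using resp forces_B forces_alt unfolding labs[symmetric] by (intro realizesI) auto
qed

lemma realizes_rule_inst:
  assumes wf: "wf_branch B" and aB: "a \<in> set B" and ri: "rule_inst C (lab (set B)) a alts"
    and re: "realizes I (set B)"
  shows "\<exists>alt\<in>set alts. \<exists>I'. realizes I' (set (B @ alt))"
proof -
  have a_lab: "fst a \<in> lab (set B)"
    using aB by (simp add: lab_def)
  have a_box: "box_labels (snd a) \<subseteq> lab (set B)"
    using wf_branch_box_labels[OF wf, of "fst a" "snd a"] aB by simp
  have a_forced: "forces R S V I (I (fst a)) (snd a)"
    using realizes_forces[OF re, of "fst a" "snd a"] aB by simp
  have old: "realizes I (set (B @ alt))"
    if "lab (set alt) \<subseteq> lab (set B)" and "\<forall>(t, A')\<in>set alt. forces R S V I (I t) A'" for alt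
    using realizes_append[OF re that] .
  from ri show ?thesis
  proof cases
    case (dneg s A')
    then show ?thesis
      using a_lab a_forced old[of "[(s, A')]"] by auto
  next
    case (imp s A1 A2)
    then show ?thesis
      using a_lab a_forced old[of "[(s, ENeg A1)]"] old[of "[(s, A2)]"] by auto
  next
    case (nimp s A1 A2)
    then show ?thesis
      using a_lab a_forced old[of "[(s, A1), (s, ENeg A2)]"] by auto
  next
    case (box s t A')
    then show ?thesis
      using a_forced old[of "[(t, A')]"] LR_mem realizes_LR[OF re] by fastforce
  next
    case (boxl r s t A')
    then show ?thesis
      using a_forced old[of "[(t, A')]"] LS_mem realizes_LS[OF re] by fastforce
  next
    case (rhd s t A1 A2)
    then have t: "t \<in> lab (set B)" and "R (I s) (I t)"
      using LR_mem realizes_LR[OF re] by blast+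
    then show ?thesis
      using rhd a_forced old[of "[(t, ENeg A1)]"] old[of "[(t, ENeg (EBoxL s (ENeg A2)))]"] by auto
  next
    case (nbox s n A')
    obtain z where z: "R (I s) z" "\<not> forces R S V I z A'" "forces R S V I z (EBox A')"
      using neg_box_witness a_forced nbox by fastforce
    have "realizes (I(RChild s n := z)) (set (B @ [(RChild s n, ENeg A'), (RChild s n, EBox A')]))"
    proof (rule realizes_append_fresh[OF wf re])
      show "z \<in> W"
        using z R_mem by blast
    qed (use nbox a_lab a_box z in auto)
    then show ?thesis
      using nbox by auto
  next
    case (nboxl s r n A')
    have r: "r \<in> lab (set B)"
      using nboxl a_lab wf_branch_label[OF wf] by simp
    obtain z where z: "S (I r) (I s) z" "\<not> forces R S V I z A'" "forces R S V I z (EBox A')"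
      using neg_boxl_witness a_forced nboxl by fastforce
    have "realizes (I(SChild s r n := z)) (set (B @ [(SChild s r n, ENeg A'), (SChild s r n, EBox A')]))"
    proof (rule realizes_append_fresh[OF wf re])
      show "z \<in> W"
        using z S_imp_R R_mem by blast
    qed (use nboxl a_lab r a_box z in auto)
    then show ?thesis
      using nboxl by auto
  next
    case (nrhd s n A1 A2)
    have "\<not> forces R S V I (I s) (ERhd A1 A2)"
      using a_forced nrhd(1) by simp
    then obtain z where z: "R (I s) z" "forces R S V I z A1" "forces R S V I z (EBoxL s (ENeg A2))"
      "forces R S V I z (EBox (ENeg A1))"
      using neg_rhd_witness by blast
    have "realizes (I(RChild s n := z))
        (set (B @ [(RChild s n, A1), (RChild s n, EBoxL s (ENeg A2)), (RChild s n, EBox (ENeg A1))]))"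
    proof (rule realizes_append_fresh[OF wf re])
      show "z \<in> W"
        using z R_mem by blast
    qed (use nrhd a_lab a_box z in \<open>auto simp del: forces.simps\<close>)
    then show ?thesis
      using nrhd by auto
  qed
qed

end

lemma lsat_iff_realizes:
  "lsat TYPE('w) C X \<longleftrightarrow>
     (\<exists>W R S V (I :: label \<Rightarrow> 'w). ilx_model C W R S V \<and> ilx_model.realizes C W R S V I X)"
  by (simp add: lsat_def ilx_model_def ilx_model.realizes_def cong: conj_cong)

lemma lsat_rule_inst:
  "wf_branch B \<Longrightarrow> a \<in> set B \<Longrightarrow> rule_inst C (lab (set B)) a alts \<Longrightarrow> lsat TYPE('w) C (set B)
    \<Longrightarrow> \<exists>alt\<in>set alts. lsat TYPE('w) C (set (B @ alt))"
  unfolding lsat_iff_realizes by (metis ilx_model.realizes_rule_inst)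

lemma wf_branch_rule_inst:
  assumes wf: "wf_branch B" and aB: "a \<in> set B" and ri: "rule_inst C (lab (set B)) a alts"
    and alt: "alt \<in> set alts"
  shows "wf_branch (B @ alt)"
proof -
  let ?L = "lab (set B)"
  have a_lab: "fst a \<in> ?L"
    using aB by (simp add: lab_def)
  have a_box: "box_labels (snd a) \<subseteq> ?L"
    using wf_branch_box_labels[OF wf, of "fst a" "snd a"] aB by simp
  have alt_lab: "t \<in> ?L \<or> (\<exists>n. t = RChild (fst a) n) \<or> (\<exists>r n. t = SChild (fst a) r n \<and> is_label t)"
    if "(t, A') \<in> set alt" for t A'
    using ri that alt a_lab LR_mem LS_mem by cases auto
  have alt_box: "box_labels A' \<subseteq> ?L" if "(t, A') \<in> set alt" for t A'
    using ri that alt a_lab a_box by cases auto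
  show ?thesis
  proof (rule wf_branch_append[OF wf])
    fix t A'
    assume t: "(t, A') \<in> set alt"
    have "is_label t \<and> (\<forall>r. strict_prefix r t \<longrightarrow> r \<in> ?L)"
      using alt_lab[OF t]
    proof (elim disjE exE conjE)
      assume "t \<in> ?L"
      then show ?thesis
        by (rule wf_branch_label[OF wf])
    next
      fix n
      assume "t = RChild (fst a) n"
      then show ?thesis
        using wf_branch_label[OF wf a_lab] a_lab by auto
    next
      fix r n
      assume "t = SChild (fst a) r n" and "is_label t"
      then show ?thesis
        using wf_branch_label[OF wf a_lab] a_lab by auto
    qed
    then show "is_label t \<and> (\<forall>r. strict_prefix r t \<longrightarrow> r \<in> ?L) \<and> box_labels A' \<subseteq> ?L"
      using alt_box[OF t] by blast
  qed
qed

lemma rule_step_cases: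
  assumes "rule_step C T T'"
  obtains T1 B T2 a alts where "T = T1 @ [B] @ T2" and "a \<in> set B"
    and "rule_inst C (lab (set B)) a alts" and "T' = T1 @ map (\<lambda>alt. B @ alt) alts @ T2"
  using assms unfolding rule_step_def by blast

lemma is_tableau_wf_branch: "is_tableau C \<Gamma> T \<Longrightarrow> B \<in> set T \<Longrightarrow> wf_branch B"
proof (induction arbitrary: B rule: is_tableau.induct)
  case (init A)
  then show ?case
    by (simp add: wf_branch_def wf_labels_def)
next
  case (add T1 B' T2 A)
  have "wf_branch (B' @ [(Root, emb A)])"
    using add.IH by (intro wf_branch_append) auto
  then show ?case
    using add by auto
next
  case (rule T T')
  then show ?case
    by (elim rule_step_cases) (auto intro: wf_branch_rule_inst)
qed

theorem mainTheorem2: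
  fixes X :: "fm set" and C :: "horn_clause set" and \<Gamma> :: "fm set"
    and T T' :: tableau
  assumes "horn_witness TYPE('w) X C"
    and "finite \<Gamma>"
    and "is_tableau C \<Gamma> T"
    and "tableau_sat TYPE('w) C T"
    and "rule_step C T T'"
  shows "tableau_sat TYPE('w) C T'"
proof -
  obtain T1 B T2 a alts where T: "T = T1 @ [B] @ T2" and aB: "a \<in> set B"
    and ri: "rule_inst C (lab (set B)) a alts" and T': "T' = T1 @ map (\<lambda>alt. B @ alt) alts @ T2"
    using assms(5) by (rule rule_step_cases)
  obtain B0 where B0: "B0 \<in> set T" and sat: "lsat TYPE('w) C (set B0)"
    using assms(4) unfolding tableau_sat_def by blast
  show ?thesis
  proof (cases "B0 = B")
    case True
    then obtain alt where "alt \<in> set alts" and sat': "lsat TYPE('w) C (set (B @ alt))"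
      using lsat_rule_inst[OF is_tableau_wf_branch[OF assms(3)] aB ri] sat T by auto
    then have "B @ alt \<in> set T'"
      using T' by simp
    with sat' show ?thesis
      unfolding tableau_sat_def by blast
  next
    case False
    then show ?thesis
      using B0 sat T T' unfolding tableau_sat_def by auto
  qed
qed

end
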